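(* Let $(A,\gamma)$ be a divided power algebra over a field $\mathbb F$. For ${\underline r}\in\mathrm{Comp}_p(n)$ and $h\in\mathscr C_{\underline r}$ set $\phi_{h,{\underline r}}(a_1,\dots,a_p)=\prod_{i=1}^p\gamma_{r_i}(a_i)$, the product taken in the commutative algebra $A$ and factors with $r_i=0$ omitted. Then $(A,\phi)$ is a step algebra (i.e. a $\Gamma(Lev)$-algebra, induced via the operad morphism $Lev\to Com$).
   Context: A divided power algebra is an associative commutative $\mathbb F$-algebra $A$ with maps $\gamma_n:A\to A$, $n\in\mathbb N$, such that (C1) $\gamma_n(\lambda a)=\lambda^n\gamma_n(a)$; (C2) $\gamma_m(a)\gamma_n(a)=\binom{m+n}{m}\gamma_{m+n}(a)$; (C3) $\gamma_n(a+b)=\gamma_n(a)+\sum_{l=1}^{n-1}\gamma_l(a)\gamma_{n-l}(b)+\gamma_n(b)$; (C4) $\gamma_1(a)=a$; (C5) $\gamma_n(ab)=n!\gamma_n(a)\gamma_n(b)=a^n\gamma_n(b)=\gamma_n(a)b^n$; (C6) $\gamma_m(\gamma_n(a))=\frac{(mn)!}{m!(n!)^m}\gamma_{mn}(a)$. $[n]=\{1,\dots,n\}$. $\mathscr L'(n)$ ($n\ge1$): maps $h:[n]\to\mathbb N$ with $\sum_i2^{-h(i)}=1$, $\sigma\cdot h=h\circ\sigma^{-1}$, unit $1\mapsto0$ in $\mathscr L'(1)$, full composition $\mu(h\otimes g_1\otimes\dots\otimes g_n)$ sending $m_1+\dots+m_{j-1}+t$ to $h(j)+g_j(t)$; $Lev$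 is the linear operad spanned by it. Compositions ${\underline r}\in\mathrm{Comp}_p(n)$ (nonnegative, sum $n$) are identified with partitions of $[n]$ into consecutive intervals ${\underline r}_i$; $\mathscr C_R$ is the set of $h\in\mathscr L'(n)$ constant on the parts of an ordered partition $R$. For $\rho\in\Sigma_p$: ${\underline r}^\rho=(r_{\rho^{-1}(i)})_i$, $\rho^*$ the associated block permutation. ${\underline r}\circ_1(l,m)=(l,m,r_2,\dots,r_p)$. $\gamma_k(Q)=(\bigsqcup_{t=0}^{k-1}(Q_j+tm))_j$; $R\otimes Q=(R_1,\dots,R_p,Q_1+n,\dots)$; ${\underline r}\diamond({\underline q}_i)_i=\gamma_{r_1}({\underline q}_1)\otimes\dots\otimes\gamma_{r_p}({\underline q}_p)$. A step algebra $(A,\phi)$: operations $\phi_{h,{\underline r}}:A^{\times p}\to A$ for $h\in\mathscr C_{\underline r}$ (with $\phi_{h,R}:=\phi_{\tau\cdot h,{\underline r}}$ when $\tau(R_i)={\underline r}_i$) satisfying (S1) $\phi_{\rho^*\cdot h,{\underline r}^\rho}(a_{\rho^{-1}(1)},\dots,a_{\rho^{-1}(p)})=\phi_{h,{\underline r}}(a_1,\dots,a_p)$; (S2) $\phi_{h,(0,{\underline r})}(a_0,a_1,\dots)=\phi_{h,{\underline r}}(a_1,\dots)$; (S3) $\phi_{h,{\underline r}}(\lambda a_1,\dots)=\lambda^{r_1}\phi_{h,{\underline r}}(a_1,\dots)$; (S4) $\binom{r_1}{l}\phi_{h,{\underline r}}(a_1,\dots,a_p)=\phi_{h,{\underline r}\circ_1(l,m)}(a_1,a_1,a_2,\dots,a_p)$;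 (S5) $\phi_{h,{\underline r}}(a+b,a_2,\dots)=\sum_{l+m=r_1}\phi_{h,{\underline r}\circ_1(l,m)}(a,b,a_2,\dots)$; (S6) $\phi_{1,(1)}(a)=a$; (S7) $\phi_{h,{\underline r}}((\phi_{g_i,{\underline q}_i}(a_{ij})_j)_i)=\big(\prod_i\frac{1}{r_i!}\prod_j\frac{(r_iq_{ij})!}{(q_{ij}!)^{r_i}}\big)\phi_{\mu(h\otimes g_1^{\otimes r_1}\otimes\dots\otimes g_p^{\otimes r_p}),{\underline r}\diamond({\underline q}_i)_i}((a_{ij})_{i,j})$ for ${\underline q}_i\in\mathrm{Comp}_{k_i}(m_i)$, $g_i\in\mathscr C_{{\underline q}_i}$. *)

theory Defs
  imports Complex_Main "HOL-Combinatorics.Permutations"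
begin

(* Conventions: everything is 0-based.  [n] is rendered as {0..<n}; the i-th
   entry of a composition / partition / argument tuple is (list) index i < p. *)

fun nprod :: "'a::times list \<Rightarrow> 'a" where
  "nprod [] = undefined"
| "nprod [x] = x"
| "nprod (x # y # xs) = x * nprod (y # xs)"

definition npow :: "'a::times \<Rightarrow> nat \<Rightarrow> 'a" where
  "npow a n = nprod (replicate n a)"

definition falg :: "('k::field \<Rightarrow> 'a::comm_ring \<Rightarrow> 'a) \<Rightarrow> bool" where
  "falg scale \<longleftrightarrow> vector_space scale \<and>
     (\<forall>c x y. scale c (x * y) = scale c x * y \<and> scale c (x * y) = x * scale c y)"

definition dp_algebra :: "('k::field \<Rightarrow> 'a::comm_ring \<Rightarrow> 'a) \<Rightarrow> (nat \<Rightarrow> 'a \<Rightarrow> 'a) \<Rightarrow> bool" where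
  "dp_algebra scale \<gamma> \<longleftrightarrow> falg scale \<and>
    (\<forall>n\<ge>1. \<forall>c a. \<gamma> n (scale c a) = scale (c ^ n) (\<gamma> n a)) \<and>
    (\<forall>m\<ge>1. \<forall>n\<ge>1. \<forall>a. \<gamma> m a * \<gamma> n a = scale (of_nat ((m + n) choose m)) (\<gamma> (m + n) a)) \<and>
    (\<forall>n\<ge>1. \<forall>a b. \<gamma> n (a + b) = \<gamma> n a + (\<Sum>l\<in>{1..n-1}. \<gamma> l a * \<gamma> (n - l) b) + \<gamma> n b) \<and>
    (\<forall>a. \<gamma> 1 a = a) \<and>
    (\<forall>n\<ge>1. \<forall>a b. \<gamma> n (a * b) = scale (of_nat (fact n)) (\<gamma> n a * \<gamma> n b) \<and>
                    \<gamma> n (a * b) = npow a n * \<gamma> n b \<and>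
                    \<gamma> n (a * b) = \<gamma> n a * npow b n) \<and>
    (\<forall>m\<ge>1. \<forall>n\<ge>1. \<forall>a. \<gamma> m (\<gamma> n a) =
        scale (of_nat (fact (m * n) div (fact m * fact n ^ m))) (\<gamma> (m * n) a))"

definition lev :: "nat \<Rightarrow> (nat \<Rightarrow> nat) set" where
  "lev n = {h. (\<Sum>i<n. (1/2::real) ^ h i) = 1 \<and> (\<forall>i\<ge>n. h i = 0)}"

text \<open>Compositions as lists of naturals; block i is an interval.\<close>

definition bstart :: "nat list \<Rightarrow> nat \<Rightarrow> nat" where
  "bstart r i = sum_list (take i r)"

definition block :: "nat list \<Rightarrow> nat \<Rightarrow> nat set" where
  "block r i = {bstart r i ..< bstart r (Suc i)}"

definition comp_parts :: "nat list \<Rightarrow> nat set list" where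
  "comp_parts r = map (block r) [0..<length r]"

definition blk :: "nat list \<Rightarrow> nat \<Rightarrow> nat" where
  "blk r x = (LEAST j. x < bstart r (Suc j))"

definition CR :: "nat set list \<Rightarrow> (nat \<Rightarrow> nat) set" where
  "CR R = {h \<in> lev (\<Sum>S\<leftarrow>R. card S). \<forall>S\<in>set R. \<forall>x\<in>S. \<forall>y\<in>S. h x = h y}"

definition Cc :: "nat list \<Rightarrow> (nat \<Rightarrow> nat) set" where
  "Cc r = CR (comp_parts r)"

text \<open>Full composition mu(h (x) g_1 (x) ... (x) g_n), g_j \<in> L'(m_j).\<close>

definition mu :: "(nat \<Rightarrow> nat) \<Rightarrow> (nat \<Rightarrow> nat) list \<Rightarrow> nat list \<Rightarrow> nat \<Rightarrow> nat" where
  "mu h gs ms x = (if x < sum_list ms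
      then h (blk ms x) + (gs ! blk ms x) (x - bstart ms (blk ms x)) else 0)"

definition rperm :: "(nat \<Rightarrow> nat) \<Rightarrow> nat list \<Rightarrow> nat list" where
  "rperm \<rho> r = map (\<lambda>i. r ! inv \<rho> i) [0..<length r]"

definition rho_star :: "(nat \<Rightarrow> nat) \<Rightarrow> nat list \<Rightarrow> nat \<Rightarrow> nat" where
  "rho_star \<rho> r x = (if x < sum_list r
      then bstart (rperm \<rho> r) (\<rho> (blk r x)) + (x - bstart r (blk r x)) else x)"

definition gammaP :: "nat \<Rightarrow> nat set list \<Rightarrow> nat \<Rightarrow> nat set list" where
  "gammaP k Q m = map (\<lambda>S. \<Union>t<k. (\<lambda>x. x + t * m) ` S) Q"

fun tensorL :: "(nat set list \<times> nat) list \<Rightarrow> nat set list" where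
  "tensorL [] = []"
| "tensorL ((Q, m) # rest) = Q @ map (\<lambda>S. (\<lambda>x. x + m) ` S) (tensorL rest)"

definition diamond :: "nat list \<Rightarrow> nat list list \<Rightarrow> nat set list" where
  "diamond r qs = tensorL (map (\<lambda>i. (gammaP (r ! i) (comp_parts (qs ! i)) (sum_list (qs ! i)),
                                      r ! i * sum_list (qs ! i))) [0..<length r])"

definition phiR :: "((nat \<Rightarrow> nat) \<Rightarrow> nat list \<Rightarrow> 'a list \<Rightarrow> 'a) \<Rightarrow> (nat \<Rightarrow> nat) \<Rightarrow> nat set list \<Rightarrow> 'a list \<Rightarrow> 'a" where
  "phiR phi h R as =
    (let c = map card R;
         \<tau> = (SOME \<tau>. \<tau> permutes {..<sum_list c} \<and> (\<forall>i<length R. \<tau> ` (R ! i) = block c i))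
     in phi (h \<circ> inv \<tau>) c as)"

definition step_coeff :: "nat list \<Rightarrow> nat list list \<Rightarrow> nat" where
  "step_coeff r qs = (\<Prod>i<length r.
      (\<Prod>j<length (qs ! i). fact (r ! i * (qs ! i ! j)) div (fact (qs ! i ! j) ^ (r ! i))) div fact (r ! i))"

definition step_algebra :: "('k::field \<Rightarrow> 'a::comm_ring \<Rightarrow> 'a) \<Rightarrow> ((nat \<Rightarrow> nat) \<Rightarrow> nat list \<Rightarrow> 'a list \<Rightarrow> 'a) \<Rightarrow> bool" where
  "step_algebra scale phi \<longleftrightarrow>
    \<comment> \<open>S1\<close>
    (\<forall>\<rho> h r as. \<rho> permutes {..<length r} \<and> h \<in> Cc r \<and> length as = length r \<longrightarrow>
        phi (h \<circ> inv (rho_star \<rho> r)) (rperm \<rho> r) (map (\<lambda>i. as ! inv \<rho> i) [0..<length r])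
        = phi h r as) \<and>
    \<comment> \<open>S2\<close>
    (\<forall>h r a0 as. h \<in> Cc (0 # r) \<and> length as = length r \<longrightarrow>
        phi h (0 # r) (a0 # as) = phi h r as) \<and>
    \<comment> \<open>S3\<close>
    (\<forall>h r1 rs c a1 as. h \<in> Cc (r1 # rs) \<and> length as = length rs \<longrightarrow>
        phi h (r1 # rs) (scale c a1 # as) = scale (c ^ r1) (phi h (r1 # rs) (a1 # as))) \<and>
    \<comment> \<open>S4\<close>
    (\<forall>h r1 rs l m a1 as. h \<in> Cc (r1 # rs) \<and> length as = length rs \<and> l + m = r1 \<longrightarrow>
        scale (of_nat (r1 choose l)) (phi h (r1 # rs) (a1 # as)) = phi h (l # m # rs) (a1 # a1 # as)) \<and>
    \<comment> \<open>S5\<close>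
    (\<forall>h r1 rs a b as. h \<in> Cc (r1 # rs) \<and> length as = length rs \<longrightarrow>
        phi h (r1 # rs) ((a + b) # as) = (\<Sum>l\<le>r1. phi h (l # (r1 - l) # rs) (a # b # as))) \<and>
    \<comment> \<open>S6\<close>
    (\<forall>a. phi (\<lambda>_. 0) [1] [a] = a) \<and>
    \<comment> \<open>S7\<close>
    (\<forall>h r gs qs as. h \<in> Cc r \<and> length gs = length r \<and> length qs = length r \<and> length as = length r \<and>
        (\<forall>i<length r. gs ! i \<in> Cc (qs ! i) \<and> length (as ! i) = length (qs ! i)) \<longrightarrow>
        phi h r (map (\<lambda>i. phi (gs ! i) (qs ! i) (as ! i)) [0..<length r])
        = scale (of_nat (step_coeff r qs))
            (phiR phi
               (mu h (concat (map (\<lambda>i. replicate (r ! i) (gs ! i)) [0..<length r]))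
                     (concat (map (\<lambda>i. replicate (r ! i) (sum_list (qs ! i))) [0..<length r])))
               (diamond r qs) (concat as)))"

end

theory Submission
  imports Defs
begin

text \<open>Write \<open>\<phi>\<^sub>h\<^sub>,\<^sub>r(a)\<close> as the product of \<open>\<gamma>\<^sub>r\<^sub>i(a\<^sub>i)\<close> over the pairs \<open>(r\<^sub>i, a\<^sub>i)\<close> with
  \<open>r\<^sub>i \<noteq> 0\<close>. Then (S1) is commutativity of the product and (S2)--(S6) are (C1)--(C4) applied to a
  single factor. For (S7), (C5) and (C6) give
  \<open>\<gamma>\<^sub>r(\<Prod>\<^sub>j \<gamma>\<^sub>q\<^sub>j(a\<^sub>j)) = (r!)\<^bsup>k-1\<^esup> \<Prod>\<^sub>j (rq\<^sub>j)!/(r!(q\<^sub>j!)\<^sup>r) \<cdot> \<Prod>\<^sub>j \<gamma>\<^sub>r\<^sub>q\<^sub>j(a\<^sub>j)\<close> for \<open>k\<close> factors,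
  whose coefficient is \<open>(\<Prod>\<^sub>j (rq\<^sub>j)!/(q\<^sub>j!)\<^sup>r)/r!\<close>, the \<open>i\<close>-th factor of the coefficient
  in (S7); and the weights \<open>r\<^sub>i q\<^sub>i\<^sub>j\<close> are the block sizes of \<open>r \<diamond> (q\<^sub>i)\<^sub>i\<close>.\<close>

section \<open>Lists and non-unital products\<close>

lemma nprod_Cons: "xs \<noteq> [] \<Longrightarrow> nprod (x # xs) = x * nprod xs"
  by (cases xs) auto

lemma nprod_append:
  fixes xs :: "'a::semigroup_mult list"
  assumes "xs \<noteq> []" "ys \<noteq> []"
  shows "nprod (xs @ ys) = nprod xs * nprod ys"
  using assms(1)
proof (induction xs)
  case (Cons x xs)
  with assms(2) show ?case by (cases "xs = []") (simp_all add: nprod_Cons mult.assoc)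
qed simp

lemma nprod_remove1:
  fixes xs :: "'a::ab_semigroup_mult list"
  assumes "x \<in> set xs" "remove1 x xs \<noteq> []"
  shows "nprod xs = x * nprod (remove1 x xs)"
  using assms
proof (induction xs)
  case (Cons y xs)
  show ?case
  proof (cases "y = x")
    case False
    then have x: "x \<in> set xs" using Cons.prems by auto
    show ?thesis
    proof (cases "remove1 x xs = []")
      case True
      with x have "xs = [x]" by (cases xs) (auto split: if_splits)
      with False show ?thesis by (simp add: mult.commute)
    next
      case rest: False
      with x have "xs \<noteq> []" by auto
      with False x rest Cons.IH show ?thesis by (simp add: nprod_Cons mult.left_commute)
    qed
  qed (use Cons.prems in \<open>simp add: nprod_Cons\<close>)
qed simp

lemma nprod_mset_eq:
  fixes xs :: "'a::ab_semigroup_mult list"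
  shows "mset xs = mset ys \<Longrightarrow> nprod xs = nprod ys"
proof (induction xs arbitrary: ys)
  case (Cons x xs)
  then have x: "x \<in> set ys" and rest: "mset xs = mset (remove1 x ys)"
    by (metis list.set_intros(1) mset.simps(2) mset_eq_setD, simp add: Cons.prems[symmetric])
  show ?case
  proof (cases "xs = []")
    case False
    with rest have "remove1 x ys \<noteq> []" by (metis mset_zero_iff)
    moreover have "nprod xs = nprod (remove1 x ys)" using Cons.IH rest by blast
    ultimately show ?thesis using False x by (simp add: nprod_Cons nprod_remove1)
  qed (use Cons.prems in \<open>auto simp: mset_eq_length\<close>)
qed simp

lemma nprod_concat:
  fixes xss :: "'a::semigroup_mult list list"
  assumes "xss \<noteq> []" "\<forall>xs\<in>set xss. xs \<noteq> []"
  shows "nprod (concat xss) = nprod (map nprod xss)"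
  using assms
proof (induction xss)
  case (Cons xs xss)
  then show ?case by (cases "xss = []") (auto simp: nprod_append nprod_Cons)
qed simp

lemma nprod_mult_Cons:
  fixes x y :: "'a::semigroup_mult"
  shows "nprod (x * y # xs) = nprod (x # y # xs)"
  by (cases xs) (simp_all add: mult.assoc)

lemma nprod_add_Cons:
  fixes x y :: "'a::semiring"
  shows "nprod ((x + y) # xs) = nprod (x # xs) + nprod (y # xs)"
  by (cases xs) (simp_all add: distrib_right)

lemma nprod_sum_Cons:
  fixes f :: "'b \<Rightarrow> 'a::comm_semiring_0"
  shows "nprod (sum f A # xs) = (\<Sum>l\<in>A. nprod (f l # xs))"
  by (cases xs) (simp_all add: sum_distrib_right)

lemma of_nat_prod_list: "of_nat (prod_list xs) = prod_list (map of_nat xs)"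
  by (induction xs) simp_all

lemma prod_list_map_filter:
  "(\<And>x. \<not> P x \<Longrightarrow> f x = 1) \<Longrightarrow> prod_list (map f (filter P xs)) = prod_list (map f xs)"
  by (induction xs) simp_all

lemma zip_concat_map:
  "(\<forall>i\<in>set I. length (f i) = length (g i)) \<Longrightarrow>
   zip (concat (map f I)) (concat (map g I)) = concat (map (\<lambda>i. zip (f i) (g i)) I)"
  by (induction I) simp_all

lemma map_apfst_zip: "map (apfst f) (zip xs ys) = zip (map f xs) ys"
  by (induction xs ys rule: list_induct2') simp_all

section \<open>Coefficients\<close>

lemma fact_mult_fact_power_dvd_fact:
  assumes "q \<noteq> 0"
  shows "fact r * fact q ^ r dvd (fact (r * q) :: nat)"
proof (induction r)
  case (Suc r)
  let ?n = "Suc r * q"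
  have "q * (?n choose q) = ?n * ((?n - 1) choose (q - 1))"
    using times_binomial_minus1_eq[of q ?n] assms by simp
  also have "\<dots> = q * (Suc r * ((?n - 1) choose (q - 1)))"
    by (metis mult.assoc mult.commute)
  finally have "q * (?n choose q) = q * (Suc r * ((?n - 1) choose (q - 1)))" .
  then have "Suc r dvd (?n choose q)"
    using assms by (metis dvd_triv_left mult_left_cancel)
  then have "fact q * ((fact r * fact q ^ r) * Suc r) dvd fact q * (fact (r * q) * (?n choose q))"
    using Suc.IH by (intro mult_dvd_mono) simp_all
  moreover have "fact (Suc r) * fact q ^ Suc r = fact q * ((fact r * fact q ^ r) * Suc r)"
    by (simp add: algebra_simps)
  moreover have "fact ?n = fact q * (fact (r * q) * (?n choose q))"
    using binomial_fact_lemma[of q ?n] by (simp add: algebra_simps)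
  ultimately show ?case by simp
qed simp

definition gamma_comp_coeff :: "nat \<Rightarrow> nat \<Rightarrow> nat" where
  "gamma_comp_coeff m n = fact (m * n) div (fact m * fact n ^ m)"

lemma fact_mult_div_fact_power:
  assumes "q \<noteq> 0"
  shows "fact (r * q) div fact q ^ r = fact r * gamma_comp_coeff r q"
proof -
  obtain c :: nat where "fact (r * q) = fact r * fact q ^ r * c"
    using fact_mult_fact_power_dvd_fact[OF assms, of r] by (metis dvdE)
  then show ?thesis by (simp add: gamma_comp_coeff_def)
qed

definition block_coeff :: "nat \<Rightarrow> nat list \<Rightarrow> nat" where
  "block_coeff r qs = (\<Prod>j<length qs. fact (r * qs ! j) div fact (qs ! j) ^ r) div fact r"

lemma block_coeff_prod_list:
  "block_coeff r qs = prod_list (map (\<lambda>q. fact (r * q) div fact q ^ r) qs) div fact r"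
  by (simp add: block_coeff_def prod.list_conv_set_nth atLeast0LessThan)

lemma block_coeff_0: "block_coeff 0 qs = 1"
  by (simp add: block_coeff_prod_list map_replicate_const)

lemma block_coeff_Cons_0: "block_coeff r (0 # qs) = block_coeff r qs"
  by (simp add: block_coeff_prod_list)

lemma block_coeff_Cons_zeros:
  assumes "q \<noteq> 0" "\<forall>x\<in>set qs. x = 0"
  shows "block_coeff r (q # qs) = gamma_comp_coeff r q"
proof -
  have "prod_list (map (\<lambda>q. fact (r * q) div fact q ^ r :: nat) qs) = 1"
    using assms(2) by (induction qs) simp_all
  then show ?thesis using assms(1) by (simp add: block_coeff_prod_list fact_mult_div_fact_power)
qed

text \<open>The field may have positive characteristic, so the recursion multiplies by \<open>r!\<close>
  instead of dividing by it; the exact divisions are taken in \<open>nat\<close>.\<close>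
lemma block_coeff_Cons:
  assumes "q \<noteq> 0" "\<exists>x\<in>set qs. x \<noteq> 0"
  shows "block_coeff r (q # qs) = fact r * gamma_comp_coeff r q * block_coeff r qs"
proof -
  define f :: "nat \<Rightarrow> nat" where "f = (\<lambda>x. fact (r * x) div fact x ^ r)"
  obtain x where "x \<in> set qs" "x \<noteq> 0" using assms(2) by blast
  then have "fact r dvd f x" by (simp add: f_def fact_mult_div_fact_power)
  moreover have "f x dvd prod_list (map f qs)"
    using \<open>x \<in> set qs\<close> by (simp add: prod_list_dvd)
  ultimately have "fact r dvd prod_list (map f qs)"
    by (rule dvd_trans)
  have "block_coeff r (q # qs) = f q * prod_list (map f qs) div fact r"
    by (simp add: block_coeff_prod_list f_def)
  also have "\<dots> = f q * block_coeff r qs"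
    using \<open>fact r dvd prod_list (map f qs)\<close> by (simp add: div_mult_swap block_coeff_prod_list f_def)
  finally show ?thesis
    using assms(1) by (simp add: f_def fact_mult_div_fact_power)
qed

lemma step_coeff_eq_prod_block_coeff:
  "step_coeff r qs = (\<Prod>i\<leftarrow>[0..<length r]. block_coeff (r ! i) (qs ! i))"
  by (simp add: step_coeff_def block_coeff_def lessThan_atLeast0 prod.distinct_set_conv_list[symmetric])

section \<open>Block sizes of compositions\<close>

lemma card_block: "i < length r \<Longrightarrow> card (block r i) = r ! i"
  by (simp add: block_def bstart_def take_Suc_conv_app_nth)

lemma block_subset: "block r i \<subseteq> {..<sum_list r}"
proof -
  have "bstart r (Suc i) \<le> sum_list r"
    unfolding bstart_def by (metis append_take_drop_id le_add1 sum_list_append)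
  then show ?thesis by (auto simp: block_def)
qed

lemma map_card_comp_parts: "map card (comp_parts r) = r"
  by (rule nth_equalityI) (simp_all add: comp_parts_def card_block)

text \<open>This keeps every product below non-empty; \<open>nprod []\<close> is \<open>undefined\<close>.\<close>

lemma sum_list_nonzero_if_Cc:
  assumes "h \<in> Cc r"
  shows "sum_list r \<noteq> 0"
proof
  assume "sum_list r = 0"
  with assms show False by (simp add: Cc_def CR_def lev_def map_card_comp_parts)
qed

lemma card_UN_translates:
  assumes "S \<subseteq> {..<m}"
  shows "card (\<Union>t<k. (\<lambda>x. x + t * m) ` S) = k * card S"
proof -
  have "finite S" using assms finite_subset by blast
  have "inj_on (\<lambda>(t, x). x + t * m) ({..<k} \<times> S)"
  proof (rule inj_onI, clarify)
    fix t x t' x' assume "x \<in> S" "x' \<in> S" "x + t * m = x' + t' * m"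
    moreover from \<open>x \<in> S\<close> \<open>x' \<in> S\<close> assms have "x < m" "x' < m" by auto
    ultimately show "t = t' \<and> x = x'"
      by (metis add.commute div_mult_self1 mod_mult_self1 div_less mod_less less_nat_zero_code add_0)
  qed
  moreover have "(\<Union>t<k. (\<lambda>x. x + t * m) ` S) = (\<lambda>(t, x). x + t * m) ` ({..<k} \<times> S)"
    by auto
  ultimately show ?thesis using \<open>finite S\<close> by (simp add: card_image card_cartesian_product)
qed

lemma map_card_gammaP: "map card (gammaP k (comp_parts q) (sum_list q)) = map ((*) k) q"
  by (rule nth_equalityI)
    (simp_all add: gammaP_def comp_parts_def card_block card_UN_translates[OF block_subset])

lemma map_card_tensorL: "map card (tensorL L) = concat (map (map card \<circ> fst) L)"
proof (induction L rule: tensorL.induct)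
  case (2 Q m rest)
  have "map card (map ((`) (\<lambda>x. x + m)) (tensorL rest)) = map card (tensorL rest)"
    by (simp add: card_image)
  with 2 show ?case by simp
qed simp

lemma map_card_diamond:
  "map card (diamond r qs) = concat (map (\<lambda>i. map ((*) (r ! i)) (qs ! i)) [0..<length r])"
  by (simp add: diamond_def map_card_tensorL o_def map_card_gammaP)

lemma zip_map_card_diamond:
  assumes "length as = length r" "\<forall>i<length r. length (as ! i) = length (qs ! i)"
  shows "zip (map card (diamond r qs)) (concat as)
    = concat (map (\<lambda>i. map (apfst ((*) (r ! i))) (zip (qs ! i) (as ! i))) [0..<length r])"
proof -
  have "concat as = concat (map (\<lambda>i. as ! i) [0..<length r])"
    using assms(1) by (metis map_nth)
  with assms(2) show ?thesis
    by (simp add: map_card_diamond zip_concat_map map_apfst_zip o_def cong: map_cong)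
qed

lemma length_concat_eq_length_map_card_diamond:
  assumes "length as = length r" "\<forall>i<length r. length (as ! i) = length (qs ! i)"
  shows "length (concat as) = length (map card (diamond r qs))"
proof -
  have "concat as = concat (map (\<lambda>i. as ! i) [0..<length r])"
    using assms(1) by (metis map_nth)
  then have "length (concat as) = (\<Sum>i\<leftarrow>[0..<length r]. length (as ! i))"
    by (simp add: length_concat o_def)
  also have "\<dots> = (\<Sum>i\<leftarrow>[0..<length r]. length (qs ! i))"
    using assms(2) by (intro arg_cong[where f = sum_list] map_cong) simp_all
  finally show ?thesis by (simp add: map_card_diamond length_concat o_def)
qed

section \<open>Divided power algebras\<close>

locale f_algebra =
  fixes scale :: "'k::field \<Rightarrow> 'a::comm_ring \<Rightarrow> 'a"
  assumes falg: "falg scale"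
begin

sublocale vector_space scale
  using falg by (simp add: falg_def)

lemma scale_mult_left: "scale c (x * y) = scale c x * y"
  using falg by (simp add: falg_def)

lemma scale_mult_scale: "scale c x * scale d y = scale (c * d) (x * y)"
  using falg by (simp add: falg_def flip: scale_mult_left)

lemma nprod_scale_Cons: "nprod (scale c x # xs) = scale c (nprod (x # xs))"
  by (cases xs) (simp_all add: scale_mult_left)

lemma nprod_map_scale:
  assumes "xs \<noteq> []"
  shows "nprod (map (\<lambda>x. scale (c x) (f x)) xs) = scale (\<Prod>x\<leftarrow>xs. c x) (nprod (map f xs))"
  using assms
proof (induction xs)
  case (Cons x xs)
  then show ?case by (cases "xs = []") (simp_all add: nprod_Cons scale_mult_scale)
qed simp

end

locale divided_power_algebra =
  fixes scale :: "'k::field \<Rightarrow> 'a::comm_ring \<Rightarrow> 'a" and \<gamma> :: "nat \<Rightarrow> 'a \<Rightarrow> 'a"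
  assumes dp: "dp_algebra scale \<gamma>"
begin

sublocale f_algebra scale
  using dp by unfold_locales (simp add: dp_algebra_def)

lemma gamma_scale: "n \<noteq> 0 \<Longrightarrow> \<gamma> n (scale c a) = scale (c ^ n) (\<gamma> n a)"
  using dp by (simp add: dp_algebra_def)

lemma gamma_mult_gamma:
  "m \<noteq> 0 \<Longrightarrow> n \<noteq> 0 \<Longrightarrow> \<gamma> m a * \<gamma> n a = scale (of_nat ((m + n) choose m)) (\<gamma> (m + n) a)"
  using dp by (simp add: dp_algebra_def)

lemma gamma_add:
  "n \<noteq> 0 \<Longrightarrow> \<gamma> n (a + b) = \<gamma> n a + (\<Sum>l\<in>{1..n-1}. \<gamma> l a * \<gamma> (n - l) b) + \<gamma> n b"
  using dp by (simp add: dp_algebra_def)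

lemma gamma_1: "\<gamma> 1 a = a"
  using dp by (simp add: dp_algebra_def)

lemma gamma_mult: "n \<noteq> 0 \<Longrightarrow> \<gamma> n (a * b) = scale (of_nat (fact n)) (\<gamma> n a * \<gamma> n b)"
  using dp by (simp add: dp_algebra_def)

lemma gamma_gamma:
  "m \<noteq> 0 \<Longrightarrow> n \<noteq> 0 \<Longrightarrow> \<gamma> m (\<gamma> n a) = scale (of_nat (gamma_comp_coeff m n)) (\<gamma> (m * n) a)"
  using dp by (simp add: dp_algebra_def gamma_comp_coeff_def)

fun gamma_factors :: "(nat \<times> 'a) list \<Rightarrow> 'a list" where
  "gamma_factors [] = []"
| "gamma_factors ((n, a) # ps) = (if n = 0 then gamma_factors ps else \<gamma> n a # gamma_factors ps)"

lemma gamma_factors_eq_map_filter: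
  "gamma_factors ps = map (\<lambda>(n, a). \<gamma> n a) (filter (\<lambda>(n, a). n \<noteq> 0) ps)"
  by (induction ps rule: gamma_factors.induct) simp_all

lemma gamma_factors_eq_Nil_iff: "gamma_factors ps = [] \<longleftrightarrow> (\<forall>n\<in>set (map fst ps). n = 0)"
  by (induction ps rule: gamma_factors.induct) auto

lemma nprod_gamma_factors_mset_eq:
  "mset ps = mset ps' \<Longrightarrow> nprod (gamma_factors ps) = nprod (gamma_factors ps')"
  by (rule nprod_mset_eq) (simp add: gamma_factors_eq_map_filter mset_filter)

lemma gamma_factors_append: "gamma_factors (ps @ ps') = gamma_factors ps @ gamma_factors ps'"
  by (simp add: gamma_factors_eq_map_filter)

lemma gamma_factors_mult_weights_eq_Nil_iff:
  "gamma_factors (map (apfst ((*) r)) ps) = [] \<longleftrightarrow> r = 0 \<or> gamma_factors ps = []"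
  by (induction ps rule: gamma_factors.induct) auto

lemma gamma_nprod_gamma_factors:
  assumes "r \<noteq> 0" "gamma_factors ps \<noteq> []"
  shows "\<gamma> r (nprod (gamma_factors ps))
    = scale (of_nat (block_coeff r (map fst ps))) (nprod (gamma_factors (map (apfst ((*) r)) ps)))"
  using assms(2)
proof (induction ps rule: gamma_factors.induct)
  case (2 q a ps)
  let ?scaled = "gamma_factors (map (apfst ((*) r)) ps)"
  consider "q = 0" | "q \<noteq> 0" "gamma_factors ps = []" | "q \<noteq> 0" "gamma_factors ps \<noteq> []"
    by blast
  then show ?case
  proof cases
    case 1
    with "2" show ?thesis by (simp add: block_coeff_Cons_0)
  next
    case 2
    then have "\<forall>x\<in>set (map fst ps). x = 0"
      by (simp only: gamma_factors_eq_Nil_iff)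
    moreover have "?scaled = []"
      using 2 by (simp add: gamma_factors_mult_weights_eq_Nil_iff)
    ultimately show ?thesis using 2 assms(1) by (simp add: block_coeff_Cons_zeros gamma_gamma)
  next
    case 3
    then have "\<exists>x\<in>set (map fst ps). x \<noteq> 0"
      by (simp only: gamma_factors_eq_Nil_iff) blast
    have "?scaled \<noteq> []"
      using 3 assms(1) by (simp add: gamma_factors_mult_weights_eq_Nil_iff)
    have "\<gamma> r (nprod (gamma_factors ((q, a) # ps)))
        = scale (of_nat (fact r)) (\<gamma> r (\<gamma> q a) * \<gamma> r (nprod (gamma_factors ps)))"
      using 3 assms(1) by (simp add: nprod_Cons gamma_mult)
    also have "\<dots> = scale (of_nat (fact r * gamma_comp_coeff r q * block_coeff r (map fst ps)))
        (\<gamma> (r * q) a * nprod ?scaled)"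
      using 3 "2.IH" assms(1) by (simp add: gamma_gamma scale_mult_scale mult.assoc)
    also have "\<dots> = scale (of_nat (block_coeff r (map fst ((q, a) # ps))))
        (nprod (gamma_factors (map (apfst ((*) r)) ((q, a) # ps))))"
      using 3 \<open>\<exists>x\<in>set (map fst ps). x \<noteq> 0\<close> \<open>?scaled \<noteq> []\<close> assms(1)
      by (simp add: block_coeff_Cons nprod_Cons)
    finally show ?thesis .
  qed
qed simp

lemma nprod_gamma_factors_subst:
  fixes rps :: "(nat \<times> (nat \<times> 'a) list) list"
  assumes "\<exists>(r, ps)\<in>set rps. r \<noteq> 0"
    and "\<forall>(r, ps)\<in>set rps. r \<noteq> 0 \<longrightarrow> gamma_factors ps \<noteq> []"
  shows "nprod (gamma_factors (map (\<lambda>(r, ps). (r, nprod (gamma_factors ps))) rps))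
    = scale (of_nat (\<Prod>(r, ps)\<leftarrow>rps. block_coeff r (map fst ps)))
        (nprod (gamma_factors (concat (map (\<lambda>(r, ps). map (apfst ((*) r)) ps) rps))))"
proof -
  define nz where "nz = filter (\<lambda>(r, ps). r \<noteq> 0) rps"
  define coeff :: "nat \<times> (nat \<times> 'a) list \<Rightarrow> nat" where "coeff = (\<lambda>(r, ps). block_coeff r (map fst ps))"
  define scaled where "scaled = (\<lambda>(r, ps). gamma_factors (map (apfst ((*) r)) ps))"
  have nz: "nz \<noteq> []" "\<forall>(r, ps)\<in>set nz. r \<noteq> 0 \<and> gamma_factors ps \<noteq> []"
    using assms by (auto simp: nz_def filter_empty_conv)
  have "gamma_factors (map (\<lambda>(r, ps). (r, nprod (gamma_factors ps))) rps)
      = map (\<lambda>(r, ps). \<gamma> r (nprod (gamma_factors ps))) nz"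
    unfolding nz_def by (induction rps) auto
  also have "\<dots> = map (\<lambda>x. scale (of_nat (coeff x)) (nprod (scaled x))) nz"
    using nz(2) by (intro map_cong) (auto simp: coeff_def scaled_def gamma_nprod_gamma_factors)
  finally have "nprod (gamma_factors (map (\<lambda>(r, ps). (r, nprod (gamma_factors ps))) rps))
      = scale (of_nat (prod_list (map coeff nz))) (nprod (map (nprod \<circ> scaled) nz))"
    using nz(1) by (simp add: nprod_map_scale of_nat_prod_list o_def)
  also have "nprod (map (nprod \<circ> scaled) nz) = nprod (concat (map scaled nz))"
    using nz by (simp add: nprod_concat scaled_def gamma_factors_mult_weights_eq_Nil_iff split_beta)
  also have "concat (map scaled nz)
      = gamma_factors (concat (map (\<lambda>(r, ps). map (apfst ((*) r)) ps) rps))"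
    unfolding nz_def scaled_def
    by (induction rps) (auto simp: gamma_factors_append gamma_factors_mult_weights_eq_Nil_iff)
  also have "prod_list (map coeff nz) = (\<Prod>(r, ps)\<leftarrow>rps. block_coeff r (map fst ps))"
    unfolding nz_def coeff_def by (rule prod_list_map_filter) (auto simp: block_coeff_0)
  finally show ?thesis .
qed

lemma gamma_factors_zip_nonempty:
  "length as = length r \<Longrightarrow> sum_list r \<noteq> 0 \<Longrightarrow> gamma_factors (zip r as) \<noteq> []"
  by (simp add: gamma_factors_eq_Nil_iff sum_list_eq_0_iff)

definition dp_phi :: "(nat \<Rightarrow> nat) \<Rightarrow> nat list \<Rightarrow> 'a list \<Rightarrow> 'a" where
  "dp_phi h r as = nprod (map (\<lambda>i. \<gamma> (r ! i) (as ! i)) (filter (\<lambda>i. r ! i \<noteq> 0) [0..<length r]))"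

lemma dp_phi_eq_nprod_gamma_factors:
  assumes "length as = length r"
  shows "dp_phi h r as = nprod (gamma_factors (zip r as))"
proof -
  have "zip r as = map (\<lambda>i. (r ! i, as ! i)) [0..<length r]"
    using assms by (intro nth_equalityI) simp_all
  then show ?thesis by (simp add: dp_phi_def gamma_factors_eq_map_filter filter_map o_def)
qed

lemma dp_phi_permute:
  assumes "\<rho> permutes {..<length r}" "length as = length r"
  shows "dp_phi h' (rperm \<rho> r) (map (\<lambda>i. as ! inv \<rho> i) [0..<length r]) = dp_phi h r as"
proof -
  have perm: "inv \<rho> permutes {..<length r}" using assms(1) by (rule permutes_inv)
  have "rperm \<rho> r = permute_list (inv \<rho>) r" "map (\<lambda>i. as ! inv \<rho> i) [0..<length r] = permute_list (inv \<rho>) as"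
    using assms(2) by (simp_all add: rperm_def permute_list_def)
  moreover have "zip (permute_list (inv \<rho>) r) (permute_list (inv \<rho>) as) = permute_list (inv \<rho>) (zip r as)"
    using perm assms(2) by (simp add: permute_list_zip)
  moreover have "mset (permute_list (inv \<rho>) (zip r as)) = mset (zip r as)"
    using perm assms(2) by simp
  then have "nprod (gamma_factors (permute_list (inv \<rho>) (zip r as))) = nprod (gamma_factors (zip r as))"
    by (rule nprod_gamma_factors_mset_eq)
  ultimately show ?thesis
    using assms(2) by (simp add: dp_phi_eq_nprod_gamma_factors)
qed

lemma dp_phi_Cons_0: "length as = length r \<Longrightarrow> dp_phi h (0 # r) (a0 # as) = dp_phi h r as"
  by (simp add: dp_phi_eq_nprod_gamma_factors)

lemma dp_phi_scale_Cons:
  "length as = length rs \<Longrightarrow>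
    dp_phi h (r1 # rs) (scale c a1 # as) = scale (c ^ r1) (dp_phi h (r1 # rs) (a1 # as))"
  by (simp add: dp_phi_eq_nprod_gamma_factors gamma_scale nprod_scale_Cons)

lemma dp_phi_split_Cons:
  assumes "length as = length rs" "l + m = r1"
  shows "scale (of_nat (r1 choose l)) (dp_phi h (r1 # rs) (a1 # as)) = dp_phi h (l # m # rs) (a1 # a1 # as)"
proof (cases "l = 0 \<or> m = 0")
  case False
  then have "\<gamma> l a1 * \<gamma> m a1 = scale (of_nat (r1 choose l)) (\<gamma> r1 a1)"
    using assms(2) by (simp add: gamma_mult_gamma)
  then have "nprod (\<gamma> l a1 # \<gamma> m a1 # R) = scale (of_nat (r1 choose l)) (nprod (\<gamma> r1 a1 # R))" for R
    by (simp only: nprod_mult_Cons[symmetric] nprod_scale_Cons)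
  with False assms show ?thesis by (simp add: dp_phi_eq_nprod_gamma_factors)
qed (use assms in \<open>auto simp: dp_phi_eq_nprod_gamma_factors\<close>)

lemma dp_phi_add_Cons:
  assumes "length as = length rs"
  shows "dp_phi h (r1 # rs) ((a + b) # as) = (\<Sum>l\<le>r1. dp_phi h (l # (r1 - l) # rs) (a # b # as))"
proof (cases r1)
  case (Suc m)
  define R where "R = gamma_factors (zip rs as)"
  have phi: "dp_phi h (l # (Suc m - l) # rs) (a # b # as)
      = (if l = 0 then nprod (\<gamma> (Suc m) b # R) else if l = Suc m then nprod (\<gamma> (Suc m) a # R)
         else nprod ((\<gamma> l a * \<gamma> (Suc m - l) b) # R))" if "l \<le> Suc m" for l
    using assms that by (simp add: dp_phi_eq_nprod_gamma_factors R_def nprod_mult_Cons)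
  have "dp_phi h (r1 # rs) ((a + b) # as) = nprod (\<gamma> (Suc m) (a + b) # R)"
    using assms Suc by (simp add: dp_phi_eq_nprod_gamma_factors R_def)
  also have "\<dots> = nprod (\<gamma> (Suc m) a # R) + (\<Sum>l\<in>{1..m}. nprod ((\<gamma> l a * \<gamma> (Suc m - l) b) # R))
      + nprod (\<gamma> (Suc m) b # R)"
    by (simp add: gamma_add nprod_add_Cons nprod_sum_Cons)
  also have "\<dots> = (\<Sum>l\<le>Suc m. dp_phi h (l # (Suc m - l) # rs) (a # b # as))"
  proof -
    have "(\<Sum>l\<le>Suc m. g l) = g 0 + (\<Sum>l\<in>{1..m}. g l) + g (Suc m)" for g :: "nat \<Rightarrow> 'a"
      by (simp add: sum.atMost_Suc atMost_atLeast0 sum.atLeast_Suc_atMost)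
    then show ?thesis by (simp add: phi add.commute)
  qed
  finally show ?thesis using Suc by simp
qed (use assms in \<open>simp add: dp_phi_eq_nprod_gamma_factors\<close>)

lemma dp_phi_unit: "dp_phi h [1] [a] = a"
  using gamma_1[of a] by (simp add: dp_phi_def)

lemma phiR_dp_phi: "phiR dp_phi h R as = dp_phi h (map card R) as"
  by (simp add: phiR_def Let_def dp_phi_def)

lemma dp_phi_compose:
  assumes "h \<in> Cc r" "length as = length r"
    and blocks: "\<forall>i<length r. gs ! i \<in> Cc (qs ! i) \<and> length (as ! i) = length (qs ! i)"
  shows "dp_phi h r (map (\<lambda>i. dp_phi (gs ! i) (qs ! i) (as ! i)) [0..<length r])
    = scale (of_nat (step_coeff r qs)) (phiR dp_phi H (diamond r qs) (concat as))"
proof -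
  define rps where "rps = map (\<lambda>i. (r ! i, zip (qs ! i) (as ! i))) [0..<length r]"
  have "zip r (map (\<lambda>i. dp_phi (gs ! i) (qs ! i) (as ! i)) [0..<length r])
      = map (\<lambda>(r, ps). (r, nprod (gamma_factors ps))) rps"
    using blocks by (intro nth_equalityI) (simp_all add: rps_def dp_phi_eq_nprod_gamma_factors)
  then have lhs: "dp_phi h r (map (\<lambda>i. dp_phi (gs ! i) (qs ! i) (as ! i)) [0..<length r])
      = nprod (gamma_factors (map (\<lambda>(r, ps). (r, nprod (gamma_factors ps))) rps))"
    by (simp add: dp_phi_eq_nprod_gamma_factors)
  have rhs: "phiR dp_phi H (diamond r qs) (concat as)
      = nprod (gamma_factors (concat (map (\<lambda>(r, ps). map (apfst ((*) r)) ps) rps)))"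
  proof -
    have lens: "\<forall>i<length r. length (as ! i) = length (qs ! i)"
      using blocks by simp
    show ?thesis
      using dp_phi_eq_nprod_gamma_factors[OF length_concat_eq_length_map_card_diamond[OF assms(2) lens]]
      by (simp add: phiR_dp_phi zip_map_card_diamond[OF assms(2) lens] rps_def o_def)
  qed
  have coeff: "step_coeff r qs = (\<Prod>(r, ps)\<leftarrow>rps. block_coeff r (map fst ps))"
    unfolding step_coeff_eq_prod_block_coeff rps_def map_map
    using blocks by (intro arg_cong[where f = prod_list] map_cong) simp_all
  obtain i where "i < length r" "r ! i \<noteq> 0"
    using sum_list_nonzero_if_Cc[OF assms(1)] by (metis in_set_conv_nth sum_list_eq_0_iff)
  then have "\<exists>(r, ps)\<in>set rps. r \<noteq> 0"
    by (force simp: rps_def)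
  moreover have "\<forall>(r, ps)\<in>set rps. gamma_factors ps \<noteq> []"
    using blocks gamma_factors_zip_nonempty sum_list_nonzero_if_Cc by (auto simp: rps_def)
  ultimately show ?thesis
    unfolding lhs rhs coeff by (intro nprod_gamma_factors_subst) auto
qed

lemma step_algebra_dp_phi: "step_algebra scale dp_phi"
  unfolding step_algebra_def using dp_phi_unit
  by (simp add: dp_phi_permute dp_phi_Cons_0 dp_phi_scale_Cons dp_phi_split_Cons dp_phi_add_Cons
      dp_phi_compose)

end

theorem proposition6p2:
  fixes scale :: "'k::field \<Rightarrow> 'a::comm_ring \<Rightarrow> 'a" and \<gamma> :: "nat \<Rightarrow> 'a \<Rightarrow> 'a"
  assumes "dp_algebra scale \<gamma>"
  shows "step_algebra scale
           (\<lambda>h r as. nprod (map (\<lambda>i. \<gamma> (r ! i) (as ! i)) (filter (\<lambda>i. r ! i \<noteq> 0) [0..<length r])))"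
proof -
  interpret divided_power_algebra scale \<gamma>
    using assms by unfold_locales
  have "dp_phi = (\<lambda>h r as. nprod (map (\<lambda>i. \<gamma> (r ! i) (as ! i)) (filter (\<lambda>i. r ! i \<noteq> 0) [0..<length r])))"
    by (intro ext) (simp add: dp_phi_def)
  with step_algebra_dp_phi show ?thesis by simp
qed

end
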